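(* Let $U=\mathbb{C}[a,b,c]$ be the commutative polynomial algebra, made into a bialgebra over $\mathbb{C}$ by $\Delta(a)=a\otimes a$, $\Delta(b)=a\otimes b+b\otimes c$, $\Delta(c)=c\otimes c$, $\varepsilon(a)=1$, $\varepsilon(b)=0$, $\varepsilon(c)=1$. Then $U\otimes_{\mathbb{C}}U$, regarded as a $U$-module via $u\cdot(x\otimes y)=\Delta(u)(x\otimes y)$ (i.e. the tensor product $U\otimes U$ in the monoidal category of $U$-modules), is not flat, and in particular not projective, over $U$.
   Context: The comultiplication and counit are extended to algebra homomorphisms $\Delta:U\to U\otimes_{\mathbb{C}}U$, $\varepsilon:U\to\mathbb{C}$. *)

theory Defs
  imports Complex_Main "HOL-Computational_Algebra.Polynomial"
begin

text \<open>U = C[a,b,c] is modelled as iterated univariate polynomials C[a][b][c].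
  U \<otimes>_C U is identified with the polynomial ring in six variables
  a1,b1,c1,a2,b2,c2 (a1 = a\<otimes>1, a2 = 1\<otimes>a etc.), modelled as iterated
  univariate polynomials.\<close>

type_synonym U = "complex poly poly poly"
type_synonym UU = "complex poly poly poly poly poly poly"

definition var_a :: U where "var_a = [:[:[:0, 1:]:]:]"
definition var_b :: U where "var_b = [:[:0, 1:]:]"
definition var_c :: U where "var_c = [:0, 1:]"

definition t_a1 :: UU where "t_a1 = [:[:[:[:[:[:0, 1:]:]:]:]:]:]"
definition t_b1 :: UU where "t_b1 = [:[:[:[:[:0, 1:]:]:]:]:]"
definition t_c1 :: UU where "t_c1 = [:[:[:[:0, 1:]:]:]:]"
definition t_a2 :: UU where "t_a2 = [:[:[:0, 1:]:]:]"
definition t_b2 :: UU where "t_b2 = [:[:0, 1:]:]"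
definition t_c2 :: UU where "t_c2 = [:0, 1:]"

definition const_UU :: "complex \<Rightarrow> UU" where
  "const_UU z = [:[:[:[:[:[:z:]:]:]:]:]:]"

definition Delta :: "U \<Rightarrow> UU" where
  "Delta p =
     poly (map_poly (\<lambda>q. poly (map_poly (\<lambda>r. poly (map_poly const_UU r) (t_a1 * t_a2)) q)
                              (t_a1 * t_b2 + t_b1 * t_c2)) p)
          (t_c1 * t_c2)"

text \<open>The counit (part of the bialgebra structure; not needed for the statement).\<close>
definition eps :: "U \<Rightarrow> complex" where
  "eps p = poly (map_poly (\<lambda>q. poly (map_poly (\<lambda>r. poly r 1) q) 0) p) 1"

definition act_UU :: "U \<Rightarrow> UU \<Rightarrow> UU" where
  "act_UU u x = Delta u * x"

definition is_module :: "('r::comm_ring_1 \<Rightarrow> 'n::ab_group_add \<Rightarrow> 'n) \<Rightarrow> 'n set \<Rightarrow> bool" where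
  "is_module act A \<longleftrightarrow>
     0 \<in> A \<and> (\<forall>x\<in>A. \<forall>y\<in>A. x + y \<in> A) \<and> (\<forall>x\<in>A. - x \<in> A) \<and>
     (\<forall>r. \<forall>x\<in>A. act r x \<in> A) \<and>
     (\<forall>x\<in>A. act 1 x = x) \<and>
     (\<forall>r s. \<forall>x\<in>A. act (r * s) x = act r (act s x)) \<and>
     (\<forall>r s. \<forall>x\<in>A. act (r + s) x = act r x + act s x) \<and>
     (\<forall>r. \<forall>x\<in>A. \<forall>y\<in>A. act r (x + y) = act r x + act r y)"

text \<open>Formal Z-linear combinations of pairs (n,m): finitely supported functions to int.\<close>
definition fs :: "'a \<Rightarrow> 'a \<Rightarrow> int" where
  "fs x = (\<lambda>p. if p = x then 1 else 0)"

text \<open>The subgroup of relations defining the tensor product A \<otimes>_r M (where M is the whole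
  type 'm with action act_m): generated by bilinearity and balancedness relations.
  Then A \<otimes>_r M = (formal sums supported on A \<times> M) / tens_rel.\<close>
inductive_set tens_rel :: "('r::comm_ring_1 \<Rightarrow> 'n::ab_group_add \<Rightarrow> 'n) \<Rightarrow> 'n set \<Rightarrow>
    ('r \<Rightarrow> 'm::ab_group_add \<Rightarrow> 'm) \<Rightarrow> ('n \<times> 'm \<Rightarrow> int) set"
  for act_n A act_m where
  rel_zero: "(\<lambda>p. 0) \<in> tens_rel act_n A act_m"
| rel_add1: "n \<in> A \<Longrightarrow> n' \<in> A \<Longrightarrow>
     (\<lambda>p. fs (n + n', m) p - fs (n, m) p - fs (n', m) p) \<in> tens_rel act_n A act_m"
| rel_add2: "n \<in> A \<Longrightarrow>
     (\<lambda>p. fs (n, m + m') p - fs (n, m) p - fs (n, m') p) \<in> tens_rel act_n A act_m"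
| rel_scal: "n \<in> A \<Longrightarrow>
     (\<lambda>p. fs (act_n r n, m) p - fs (n, act_m r m) p) \<in> tens_rel act_n A act_m"
| rel_plus: "x \<in> tens_rel act_n A act_m \<Longrightarrow> y \<in> tens_rel act_n A act_m \<Longrightarrow>
     (\<lambda>p. x p + y p) \<in> tens_rel act_n A act_m"
| rel_neg: "x \<in> tens_rel act_n A act_m \<Longrightarrow> (\<lambda>p. - x p) \<in> tens_rel act_n A act_m"

text \<open>M (= the whole type 'm with action act_m, assumed to be an r-module) is flat
  with respect to test modules living in the type 'n: for every module A and submodule
  B \<subseteq> A (every injective module map is, up to isomorphism, such an inclusion), the
  induced map B \<otimes> M \<rightarrow> A \<otimes> M is injective, i.e. a formal sum supported on B \<times> M
  which is a relation in A \<otimes> M is already a relation in B \<otimes> M.\<close>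
definition flat_wrt :: "'n::ab_group_add itself \<Rightarrow> ('r::comm_ring_1 \<Rightarrow> 'm::ab_group_add \<Rightarrow> 'm) \<Rightarrow> bool" where
  "flat_wrt _ act_m \<longleftrightarrow>
     (\<forall>(act_n :: 'r \<Rightarrow> 'n \<Rightarrow> 'n) A B.
        is_module act_n A \<and> is_module act_n B \<and> B \<subseteq> A \<longrightarrow>
        (\<forall>z. finite {p. z p \<noteq> 0} \<and> {p. z p \<noteq> 0} \<subseteq> B \<times> UNIV \<and>
             z \<in> tens_rel act_n A act_m \<longrightarrow> z \<in> tens_rel act_n B act_m))"

end

theory Submission
  imports Defs
begin

(* Let M = U \<otimes> U with U acting through \<Delta>, let \<lambda> : M \<rightarrow> \<complex> be the coefficient
   of the monomial b1 a2, and let I = {n \<in> U. \<lambda>(\<Delta>(n) m) = 0 for all m}, an ideal of U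
   containing a, b and c (every monomial of \<Delta>(a), \<Delta>(b), \<Delta>(c) contains a1, c1 or c2).
   The formal sum  z = a \<otimes> b2 c1 - b \<otimes> a2 c1 + c \<otimes> a2 b1  is supported on I \<times> M and vanishes
   in U \<otimes> M = M, because \<Delta>(a) b2 c1 - \<Delta>(b) a2 c1 + \<Delta>(c) a2 b1 = 0.  It does not vanish in
   I \<otimes> M: for the derivation \<partial> = \<partial>/\<partial>c of U, the functional n \<otimes> m \<mapsto> \<lambda>(\<Delta>(\<partial>n) m)
   kills all defining relations of I \<otimes> M (for the balancing relation this is Leibniz' rule
   together with n \<in> I), yet takes the value \<lambda>(a2 b1) = 1 on z.  Hence I \<otimes> M \<rightarrow> U \<otimes> M is
   not injective and M is not flat. *)

definition is_ring_hom :: "('a::comm_ring_1 \<Rightarrow> 'b::comm_ring_1) \<Rightarrow> bool" where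
  "is_ring_hom h \<longleftrightarrow>
     h 0 = 0 \<and> h 1 = 1 \<and> (\<forall>x y. h (x + y) = h x + h y) \<and> (\<forall>x y. h (x * y) = h x * h y)"

lemma is_ring_hom_eval_map_poly:
  assumes "is_ring_hom h"
  shows "is_ring_hom (\<lambda>p. poly (map_poly h p) x)"
proof -
  have h0: "h 0 = 0" and h1: "h 1 = 1" and h_add: "\<And>a b. h (a + b) = h a + h b"
    and h_mult: "\<And>a b. h (a * b) = h a * h b"
    using assms by (auto simp: is_ring_hom_def)
  have map_add: "map_poly h (p + q) = map_poly h p + map_poly h q" for p q
    by (intro poly_eqI) (simp add: coeff_map_poly h0 h_add)
  have map_smult: "map_poly h (smult c p) = smult (h c) (map_poly h p)" for c p
    by (rule map_poly_smult) (auto simp: h0 h_mult)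
  have eval_mult: "poly (map_poly h (p * q)) x = poly (map_poly h p) x * poly (map_poly h q) x"
    for p q
    by (induction p) (simp_all add: map_add map_smult map_poly_pCons h0 algebra_simps)
  show ?thesis
    unfolding is_ring_hom_def using h1 by (simp add: map_add eval_mult h0)
qed

lemma is_ring_hom_const_UU: "is_ring_hom const_UU"
  by (simp add: is_ring_hom_def const_UU_def flip: one_pCons)

lemma is_ring_hom_Delta: "is_ring_hom Delta"
  unfolding Delta_def[abs_def]
  by (intro is_ring_hom_eval_map_poly is_ring_hom_const_UU)

lemma Delta_one: "Delta 1 = 1"
  and Delta_zero: "Delta 0 = 0"
  using is_ring_hom_Delta by (auto simp: is_ring_hom_def)

lemma Delta_a: "Delta var_a = t_a1 * t_a2"
  and Delta_b: "Delta var_b = t_a1 * t_b2 + t_b1 * t_c2"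
  and Delta_c: "Delta var_c = t_c1 * t_c2"
  by (simp_all add: Delta_def var_a_def var_b_def var_c_def map_poly_pCons const_UU_def
      flip: one_pCons)

text \<open>The elementary notion of module on the whole carrier agrees with the library locale,
  whose derived rules (e.g. for negation) we then get for free.\<close>
lemma is_module_UNIV_iff: "is_module act UNIV \<longleftrightarrow> module act"
  unfolding is_module_def module_def by (auto simp: mult.commute)

lemma module_via_ring_hom:
  assumes "is_ring_hom h"
  shows "module (\<lambda>r x. h r * x)"
  using assms by unfold_locales (auto simp: is_ring_hom_def algebra_simps)

lemma module_mult: "module ((*) :: 'r::comm_ring_1 \<Rightarrow> 'r \<Rightarrow> 'r)"
  using module_via_ring_hom[of "\<lambda>x::'r. x"] by (simp add: is_ring_hom_def)

lemma module_act_UU: "module act_UU"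
  using module_via_ring_hom[OF is_ring_hom_Delta] by (simp add: act_UU_def[abs_def])

definition vanishing_ideal :: "('r \<Rightarrow> 'm \<Rightarrow> 'm) \<Rightarrow> ('m \<Rightarrow> 'v::zero) \<Rightarrow> 'r set" where
  "vanishing_ideal act \<phi> = {n. \<forall>m. \<phi> (act n m) = 0}"

lemma is_module_vanishing_ideal:
  fixes act :: "'r::comm_ring_1 \<Rightarrow> 'm::ab_group_add \<Rightarrow> 'm" and \<phi> :: "'m \<Rightarrow> 'v::ab_group_add"
  assumes act: "module act" and \<phi>: "additive \<phi>"
  shows "is_module (*) (vanishing_ideal act \<phi>)"
proof -
  interpret act: module act by (fact act)
  interpret \<phi>: additive \<phi> by (fact \<phi>)
  have ideal: "\<phi> (act (r * n) m) = 0" if "\<forall>m. \<phi> (act n m) = 0" for r n m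
  proof -
    have "act (r * n) m = act n (act r m)"
      by (simp add: mult.commute)
    then show ?thesis
      using that by (simp del: act.scale_scale)
  qed
  show ?thesis
    unfolding is_module_def
    by (auto simp: ideal vanishing_ideal_def act.scale_left_distrib \<phi>.add \<phi>.zero \<phi>.minus
        distrib_left distrib_right mult.assoc)
qed

definition finite_support :: "('a \<Rightarrow> int) \<Rightarrow> bool" where
  "finite_support w \<longleftrightarrow> finite {p. w p \<noteq> 0}"

lemma finite_support_zero [simp]: "finite_support (\<lambda>p. 0)"
  by (simp add: finite_support_def)

lemma finite_support_fs [simp]: "finite_support (fs x)"
  unfolding finite_support_def by (rule finite_subset[of _ "{x}"]) (auto simp: fs_def)

lemma finite_support_add [simp]:
  "finite_support x \<Longrightarrow> finite_support y \<Longrightarrow> finite_support (\<lambda>p. x p + y p)"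
  unfolding finite_support_def
  by (rule finite_subset[of _ "{p. x p \<noteq> 0} \<union> {p. y p \<noteq> 0}"]) auto

lemma finite_support_diff [simp]:
  "finite_support x \<Longrightarrow> finite_support y \<Longrightarrow> finite_support (\<lambda>p. x p - y p)"
  unfolding finite_support_def
  by (rule finite_subset[of _ "{p. x p \<noteq> 0} \<union> {p. y p \<noteq> 0}"]) auto

lemma finite_support_neg [simp]: "finite_support (\<lambda>p. - x p) = finite_support x"
  by (simp add: finite_support_def)

lemma finite_support_tens_rel:
  "w \<in> tens_rel act_n A act_m \<Longrightarrow> finite_support w"
  by (induction rule: tens_rel.induct) simp_all

definition pairing :: "('a \<Rightarrow> 'v::comm_ring_1) \<Rightarrow> ('a \<Rightarrow> int) \<Rightarrow> 'v" where
  "pairing F w = (\<Sum>p | w p \<noteq> 0. of_int (w p) * F p)"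

lemma pairing_over:
  "finite S \<Longrightarrow> {p. w p \<noteq> 0} \<subseteq> S \<Longrightarrow> pairing F w = (\<Sum>p\<in>S. of_int (w p) * F p)"
  unfolding pairing_def by (rule sum.mono_neutral_left) auto

lemma pairing_fs [simp]: "pairing F (fs x) = F x"
proof -
  have "pairing F (fs x) = (\<Sum>p\<in>{x}. of_int (fs x p) * F p)"
    by (rule pairing_over) (auto simp: fs_def)
  then show ?thesis by (simp add: fs_def)
qed

lemma pairing_add:
  assumes "finite_support x" "finite_support y"
  shows "pairing F (\<lambda>p. x p + y p) = pairing F x + pairing F y"
proof -
  let ?S = "{p. x p \<noteq> 0} \<union> {p. y p \<noteq> 0}"
  have fin: "finite ?S" using assms by (simp add: finite_support_def)
  have "pairing F (\<lambda>p. x p + y p) = (\<Sum>p\<in>?S. of_int (x p + y p) * F p)"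
    by (rule pairing_over[OF fin]) auto
  also have "\<dots> = (\<Sum>p\<in>?S. of_int (x p) * F p) + (\<Sum>p\<in>?S. of_int (y p) * F p)"
    by (simp add: distrib_right sum.distrib)
  also have "\<dots> = pairing F x + pairing F y"
    by (simp add: pairing_over[OF fin, of x] pairing_over[OF fin, of y])
  finally show ?thesis .
qed

lemma pairing_neg: "pairing F (\<lambda>p. - x p) = - pairing F x"
  by (simp add: pairing_def sum_negf)

lemma pairing_diff:
  assumes "finite_support x" "finite_support y"
  shows "pairing F (\<lambda>p. x p - y p) = pairing F x - pairing F y"
  using pairing_add[of x "\<lambda>p. - y p" F] assms by (simp add: pairing_neg)

text \<open>The balancing relation r n \<otimes> m = n \<otimes> r m contributes \<phi>(D(r) n \<cdot> m) by Leibniz' rule,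
  which is zero because n \<in> I.\<close>
lemma pairing_derivation_tens_rel:
  fixes act :: "'r::comm_ring_1 \<Rightarrow> 'm::ab_group_add \<Rightarrow> 'm" and \<phi> :: "'m \<Rightarrow> 'v::comm_ring_1"
  assumes act: "module act" and \<phi>: "additive \<phi>"
    and D_add: "\<And>x y. D (x + y) = D x + D y"
    and D_mult: "\<And>x y. D (x * y) = x * D y + y * D x"
    and w: "w \<in> tens_rel (*) (vanishing_ideal act \<phi>) act"
  shows "pairing (\<lambda>(n, m). \<phi> (act (D n) m)) w = 0"
  using w
proof induction
  case rel_zero
  show ?case by (simp add: pairing_def)
next
  case (rel_add1 n n' m)
  show ?case
    by (simp add: pairing_diff D_add module.scale_left_distrib[OF act]
        additive.add[OF \<phi>])
next
  case (rel_add2 n m m')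
  show ?case
    by (simp add: pairing_diff module.scale_right_distrib[OF act]
        additive.add[OF \<phi>])
next
  case (rel_scal n r m)
  have n_vanishes: "\<phi> (act n (act (D r) m)) = 0"
    using rel_scal by (simp add: vanishing_ideal_def)
  have "act (D (r * n)) m = act n (act (D r) m) + act (D n) (act r m)"
    by (simp add: D_mult module.scale_left_distrib[OF act] module.scale_scale[OF act]
        mult.commute)
  then show ?case
    by (simp add: pairing_diff additive.add[OF \<phi>] n_vanishes)
next
  case (rel_plus x y)
  then show ?case by (simp add: pairing_add finite_support_tens_rel)
next
  case (rel_neg x)
  then show ?case by (simp add: pairing_neg)
qed

lemma tens_rel_diff:
  "x \<in> tens_rel act_n A act_m \<Longrightarrow> y \<in> tens_rel act_n A act_m \<Longrightarrow>
   (\<lambda>p. x p - y p) \<in> tens_rel act_n A act_m"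
  unfolding diff_conv_add_uminus by (intro rel_plus rel_neg)

text \<open>In R \<otimes> M every r \<otimes> m equals 1 \<otimes> r m, so a three-term sum whose image in M is zero
  is a relation.\<close>
lemma tens_rel_move_scalar:
  "(\<lambda>p. fs (r, m) p - fs (1, act r m) p) \<in> tens_rel (*) (UNIV :: 'r::comm_ring_1 set) act"
  using rel_scal[of 1 UNIV "(*)" r m act] by simp

lemma tens_rel_three_term:
  fixes act :: "'r::comm_ring_1 \<Rightarrow> 'm::ab_group_add \<Rightarrow> 'm"
  assumes "act r1 m1 + act r3 m3 = act r2 m2"
  shows "(\<lambda>p. fs (r1, m1) p - fs (r2, m2) p + fs (r3, m3) p) \<in> tens_rel (*) UNIV act"
proof -
  let ?x = "act r1 m1" and ?y = "act r3 m3"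
  have "(\<lambda>p. fs (r1, m1) p - fs (1, ?x) p + (fs (r3, m3) p - fs (1, ?y) p)
          - (fs (r2, m2) p - fs (1, ?x + ?y) p)
          - (fs (1, ?x + ?y) p - fs (1, ?x) p - fs (1, ?y) p)) \<in> tens_rel (*) UNIV act"
    using tens_rel_move_scalar[of r2 m2 act] assms
    by (intro tens_rel_diff[OF tens_rel_diff[OF rel_plus]] tens_rel_move_scalar rel_add2) auto
  then show ?thesis by (simp add: algebra_simps)
qed

text \<open>The functional \<lambda> on U \<otimes> U: the coefficient of the monomial a2 b1.  It kills every
  multiple of \<Delta>(a), \<Delta>(b) and \<Delta>(c).\<close>
definition lam :: "UU \<Rightarrow> complex" where
  "lam x = coeff (coeff (coeff (coeff (coeff (coeff x 0) 0) 1) 0) 1) 0"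

lemma additive_lam: "additive lam"
  by standard (simp add: lam_def)

lemma lam_a2_b1: "lam (t_a2 * t_b1) = 1"
  by (simp add: lam_def t_a2_def t_b1_def coeff_pCons split: nat.splits)

lemma generators_in_vanishing_ideal:
  "var_a \<in> vanishing_ideal act_UU lam" "var_b \<in> vanishing_ideal act_UU lam"
  "var_c \<in> vanishing_ideal act_UU lam"
  by (simp_all add: vanishing_ideal_def act_UU_def Delta_a Delta_b Delta_c lam_def
      t_a1_def t_a2_def t_b1_def t_b2_def t_c1_def t_c2_def coeff_pCons distrib_right
      split: nat.splits)

theorem mainTheorem4:
  shows "is_module act_UU (UNIV :: UU set) \<and> \<not> flat_wrt TYPE(U) act_UU"
proof
  show "is_module act_UU (UNIV :: UU set)"
    using module_act_UU by (simp add: is_module_UNIV_iff)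
  let ?I = "vanishing_ideal act_UU lam"
  define z where "z = (\<lambda>p. fs (var_a, t_b2 * t_c1) p - fs (var_b, t_a2 * t_c1) p
                           + fs (var_c, t_a2 * t_b1) p)"
  have z_zero_in_U: "z \<in> tens_rel (*) UNIV act_UU"
    unfolding z_def
    by (rule tens_rel_three_term) (simp add: act_UU_def Delta_a Delta_b Delta_c algebra_simps)
  have z_support: "{p. z p \<noteq> 0} \<subseteq> ?I \<times> UNIV"
    using generators_in_vanishing_ideal by (auto simp: z_def fs_def)
  have "pairing (\<lambda>(n, m). lam (act_UU (pderiv n) m)) z = 1"
    by (simp add: z_def pairing_add pairing_diff act_UU_def
        var_a_def var_b_def var_c_def pderiv_pCons Delta_zero Delta_one lam_a2_b1
        flip: one_pCons)
  then have "z \<notin> tens_rel (*) ?I act_UU"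
    using pairing_derivation_tens_rel[OF module_act_UU additive_lam pderiv_add pderiv_mult]
    by fastforce
  moreover have "is_module (*) (UNIV :: U set)" and "is_module (*) ?I"
    using module_mult is_module_vanishing_ideal[OF module_act_UU additive_lam]
    by (simp_all add: is_module_UNIV_iff)
  ultimately show "\<not> flat_wrt TYPE(U) act_UU"
    unfolding flat_wrt_def
    using z_zero_in_U z_support finite_support_tens_rel[OF z_zero_in_U]
    by (auto simp: finite_support_def)
qed

end
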